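(* Let $K\ge3$ and let all arms share the same exponential family with log-partition function $\mathcal{A}$ on an open convex $\Psi\subset\mathbb{R}^d$ (minimal representation, $\mathcal{A}$ strictly convex and $C^2$ with positive definite Hessian, conjugate $\mathcal{F}$ strictly convex and $C^2$). Let $\boldsymbol{\theta}\ne\boldsymbol{\theta}'\in\Psi$ with expectation parameters $\boldsymbol{\kappa}=\nabla\mathcal{A}(\boldsymbol{\theta})$, $\boldsymbol{\kappa}'=\nabla\mathcal{A}(\boldsymbol{\theta}')$. Put $c=\frac{K-2}{K-1}$ and, for $\lambda\in[0,1]$, $$\tilde{\boldsymbol{\kappa}}(\lambda)=\frac{\lambda\boldsymbol{\kappa}+(1-\lambda)c\,\boldsymbol{\kappa}'}{\lambda+(1-\lambda)c},\qquad\tilde{\boldsymbol{\eta}}(\lambda)=\nabla\mathcal{F}(\tilde{\boldsymbol{\kappa}}(\lambda)),$$ $$\Phi(\lambda)=\lambda D(\boldsymbol{\theta}\|\tilde{\boldsymbol{\eta}}(\lambda))+(1-\lambda)c\,D(\boldsymbol{\theta}'\|\tilde{\boldsymbol{\eta}}(\lambda)).$$ Then $\Phi$ is twice differentiable on $(0,1)$ with $\Phi''(\lambda)<0$ there; in particular $\Phi$ is strictly concave on $[0,1]$.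
   Context: $D(\boldsymbol{\eta}\|\boldsymbol{\eta}')=(\boldsymbol{\eta}-\boldsymbol{\eta}')^T\nabla\mathcal{A}(\boldsymbol{\eta})-\mathcal{A}(\boldsymbol{\eta})+\mathcal{A}(\boldsymbol{\eta}')$ is the Kullback–Leibler divergence between the family members with natural parameters $\boldsymbol{\eta}$ and $\boldsymbol{\eta}'$; $\nabla\mathcal{F}$ is the inverse of $\nabla\mathcal{A}$, and $\tilde{\boldsymbol{\kappa}}(\lambda)$ is assumed to lie in the domain where $\nabla\mathcal{F}$ maps into $\Psi$. (In the odd-arm problem, hypothesis $l$ is $\Theta_l=\{\overline{\boldsymbol{\eta}}:\boldsymbol{\eta}_l=\boldsymbol{\theta},\ \boldsymbol{\eta}_j=\boldsymbol{\theta}'\ \forall j\ne l,\ \boldsymbol{\theta}\ne\boldsymbol{\theta}'\}$, and $\Phi(\lambda)$ is the reduced objective obtained when weight $\lambda$ is put on the odd arm and weight $(1-\lambda)/(K-1)$ on each other arm.) *)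

theory Defs
  imports "HOL-Analysis.Analysis"
begin

definition strict_convex_on :: "'a::real_vector set \<Rightarrow> ('a \<Rightarrow> real) \<Rightarrow> bool" where
  "strict_convex_on S f \<longleftrightarrow>
     (\<forall>x\<in>S. \<forall>y\<in>S. \<forall>u::real. x \<noteq> y \<and> 0 < u \<and> u < 1 \<and> (1 - u) *\<^sub>R x + u *\<^sub>R y \<in> S \<longrightarrow>
        f ((1 - u) *\<^sub>R x + u *\<^sub>R y) < (1 - u) * f x + u * f y)"

definition strict_concave_on :: "'a::real_vector set \<Rightarrow> ('a \<Rightarrow> real) \<Rightarrow> bool" where
  "strict_concave_on S f \<longleftrightarrow> strict_convex_on S (\<lambda>x. - f x)"

definition KLdiv :: "('a::real_inner \<Rightarrow> real) \<Rightarrow> ('a \<Rightarrow> 'a) \<Rightarrow> 'a \<Rightarrow> 'a \<Rightarrow> real" where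
  "KLdiv A gradA eta eta' = inner (eta - eta') (gradA eta) - A eta + A eta'"

end

theory Submission
  imports Defs
begin

text \<open>Writing \<open>w(\<lambda>) = \<lambda> + (1 - \<lambda>) c\<close>, \<open>\<tilde>\<kappa>(\<lambda>)\<close> for the tilted mean and
  \<open>G(k) = \<langle>\<nabla>F k, k\<rangle> - A(\<nabla>F k)\<close> for the Legendre conjugate of \<open>A\<close>, the KL terms
  combine into \<open>\<Phi>(\<lambda>) = L(\<lambda>) - w(\<lambda>) G(\<tilde>\<kappa>(\<lambda>))\<close> with \<open>L\<close> affine. Since
  \<open>\<nabla>G = \<nabla>F\<close> and \<open>\<tilde>\<kappa>'(\<lambda>) = c / w(\<lambda>)\<^sup>2 (\<kappa> - \<kappa>')\<close>, differentiating twice gives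
  \<open>\<Phi>''(\<lambda>) = - c\<^sup>2 / w(\<lambda>)\<^sup>3 \<langle>\<nabla>\<^sup>2F(\<tilde>\<kappa>) (\<kappa> - \<kappa>'), \<kappa> - \<kappa>'\<rangle>\<close>, which is negative
  because the Hessian of \<open>F\<close> is the inverse of the positive definite Hessian of \<open>A\<close>.\<close>

lemma chord_below_if_derivative_decreasing:
  fixes f f' :: "real \<Rightarrow> real"
  assumes der: "\<And>t. a \<le> t \<Longrightarrow> t \<le> b \<Longrightarrow> (f has_real_derivative f' t) (at t)"
    and dec: "\<And>s t. a \<le> s \<Longrightarrow> s < t \<Longrightarrow> t \<le> b \<Longrightarrow> f' t < f' s"
    and xy: "a \<le> x" "x < y" "y \<le> b" and u: "0 < u" "u < 1"
  shows "(1 - u) * f x + u * f y < f ((1 - u) * x + u * y)"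
proof -
  define z where "z = (1 - u) * x + u * y"
  have zx: "z - x = u * (y - x)" and yz: "y - z = (1 - u) * (y - x)"
    by (simp_all add: z_def algebra_simps)
  have "0 < u * (y - x)" and "0 < (1 - u) * (y - x)" using u xy by simp_all
  have "x < z" using zx \<open>0 < u * (y - x)\<close> by linarith
  have "z < y" using yz \<open>0 < (1 - u) * (y - x)\<close> by linarith
  obtain p where p: "x < p" "p < z" "f z - f x = (z - x) * f' p"
    using MVT2[OF \<open>x < z\<close>, of f f'] der xy \<open>z < y\<close> by fastforce
  obtain q where q: "z < q" "q < y" "f y - f z = (y - z) * f' q"
    using MVT2[OF \<open>z < y\<close>, of f f'] der xy \<open>x < z\<close> by fastforce
  have "f' q < f' p" using dec[of p q] p q xy by linarith
  moreover have "0 < u * (1 - u) * (y - x)" using u xy by simp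
  ultimately have "u * (1 - u) * (y - x) * f' q < u * (1 - u) * (y - x) * f' p"
    by (rule mult_strict_left_mono)
  moreover have "(1 - u) * (f z - f x) = u * (1 - u) * (y - x) * f' p"
    using p(3) zx by simp
  moreover have "u * (f y - f z) = u * (1 - u) * (y - x) * f' q"
    using q(3) yz by simp
  ultimately have "u * (f y - f z) < (1 - u) * (f z - f x)" by linarith
  thus ?thesis unfolding z_def[symmetric] by (simp add: algebra_simps)
qed

lemma strict_concave_on_if_second_derivative_neg:
  fixes f f' f'' :: "real \<Rightarrow> real"
  assumes der: "\<And>t. t \<in> {a..b} \<Longrightarrow> (f has_real_derivative f' t) (at t)"
    and der2: "\<And>t. t \<in> {a..b} \<Longrightarrow> (f' has_real_derivative f'' t) (at t)"
    and neg: "\<And>t. t \<in> {a..b} \<Longrightarrow> f'' t < 0"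
  shows "strict_concave_on {a..b} f"
proof -
  have dec: "f' t < f' s" if "a \<le> s" "s < t" "t \<le> b" for s t
    by (rule DERIV_neg_imp_decreasing[OF \<open>s < t\<close>]) (use that der2 neg in force)
  have chord: "(1 - u) * f x + u * f y < f ((1 - u) * x + u * y)"
    if "x \<in> {a..b}" "y \<in> {a..b}" "x < y" "0 < u" "u < 1" for x y u
    by (rule chord_below_if_derivative_decreasing[OF der dec]) (use that in auto)
  show ?thesis
    unfolding strict_concave_on_def strict_convex_on_def
  proof (intro ballI allI impI)
    fix x y u :: real
    assume xy: "x \<in> {a..b}" "y \<in> {a..b}"
      and h: "x \<noteq> y \<and> 0 < u \<and> u < 1 \<and> (1 - u) *\<^sub>R x + u *\<^sub>R y \<in> {a..b}"
    show "- f ((1 - u) *\<^sub>R x + u *\<^sub>R y) < (1 - u) * - f x + u * - f y"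
    proof (cases "x < y")
      case True
      from chord[OF xy True, of u] h show ?thesis by simp
    next
      case False
      hence "y < x" using h by simp
      from chord[OF xy(2,1) this, of "1 - u"] h show ?thesis
        by (simp add: algebra_simps)
    qed
  qed
qed

text \<open>The derivative of an inverse is the inverse of the derivative, so it inherits
  positive definiteness (in finite dimension injectivity gives surjectivity).\<close>

lemma pos_def_derivative_of_inverse:
  fixes g h :: "'a::euclidean_space \<Rightarrow> 'a"
  assumes U: "open U" "x \<in> U" and inv: "\<And>y. y \<in> U \<Longrightarrow> h (g y) = y"
    and g_der: "(g has_derivative G) (at x)" and h_der: "(h has_derivative H) (at (g x))"
    and G_pd: "\<And>v. v \<noteq> 0 \<Longrightarrow> 0 < inner v (G v)"
    and "v \<noteq> 0"
  shows "0 < inner (H v) v"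
proof -
  have "((h \<circ> g) has_derivative (H \<circ> G)) (at x)"
    using diff_chain_at[OF g_der h_der] .
  moreover have "((h \<circ> g) has_derivative id) (at x)"
    by (rule has_derivative_transform_within_open[OF has_derivative_id U]) (simp add: inv)
  ultimately have HG: "H \<circ> G = id" by (rule has_derivative_unique)
  have lin: "linear G" using g_der has_derivative_linear by blast
  have "inj G" by (metis HG comp_apply id_apply injI)
  then obtain u where u: "v = G u"
    using lin linear_injective_imp_surjective by (metis surjD)
  have "u \<noteq> 0" using u \<open>v \<noteq> 0\<close> lin linear_0 by blast
  moreover have "H v = u" using fun_cong[OF HG, of u] u by simp
  ultimately show ?thesis using G_pd u by (simp add: inner_commute)
qed

lemma has_derivative_legendre_conjugate:
  fixes A :: "'a::real_inner \<Rightarrow> real"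
  assumes A_der: "(A has_derivative (\<lambda>h. inner h k)) (at (g k))"
    and g_der: "(g has_derivative G) (at k)"
  shows "((\<lambda>k. inner (g k) k - A (g k)) has_derivative (\<lambda>h. inner (g k) h)) (at k)"
proof -
  have "((\<lambda>k. inner (g k) k) has_derivative (\<lambda>h. inner (g k) h + inner (G h) k)) (at k)"
    using has_derivative_inner[OF g_der has_derivative_ident] by simp
  moreover have "((\<lambda>k. A (g k)) has_derivative (\<lambda>h. inner (G h) k)) (at k)"
    using diff_chain_at[OF g_der A_der] by (simp add: o_def)
  ultimately show ?thesis
    by (rule has_derivative_eq_rhs[OF has_derivative_diff]) simp
qed

definition tilted_mean :: "real \<Rightarrow> 'a::real_vector \<Rightarrow> 'a \<Rightarrow> real \<Rightarrow> 'a" where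
  "tilted_mean c \<kappa> \<kappa>' l = (1 / (l + (1 - l) * c)) *\<^sub>R (l *\<^sub>R \<kappa> + ((1 - l) * c) *\<^sub>R \<kappa>')"

lemma tilted_mean_scaled:
  "l + (1 - l) * c \<noteq> 0 \<Longrightarrow>
    (l + (1 - l) * c) *\<^sub>R tilted_mean c \<kappa> \<kappa>' l = l *\<^sub>R \<kappa> + ((1 - l) * c) *\<^sub>R \<kappa>'"
  by (simp add: tilted_mean_def)

lemma has_vector_derivative_tilted_mean:
  assumes w: "l + (1 - l) * c \<noteq> 0"
  shows "(tilted_mean c \<kappa> \<kappa>' has_vector_derivative
           (c / (l + (1 - l) * c)\<^sup>2) *\<^sub>R (\<kappa> - \<kappa>')) (at l)"
proof -
  have eq: "tilted_mean c \<kappa> \<kappa>' =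
      (\<lambda>l. (l / (l + (1 - l) * c)) *\<^sub>R \<kappa> + ((1 - l) * c / (l + (1 - l) * c)) *\<^sub>R \<kappa>')"
    by (rule ext) (simp add: tilted_mean_def scaleR_add_right)
  have a: "((\<lambda>l. l / (l + (1 - l) * c)) has_real_derivative c / (l + (1 - l) * c)\<^sup>2) (at l)"
    using w by (auto intro!: derivative_eq_intros simp: field_simps power2_eq_square)
  have b: "((\<lambda>l. (1 - l) * c / (l + (1 - l) * c)) has_real_derivative
      - c / (l + (1 - l) * c)\<^sup>2) (at l)"
    using w by (auto intro!: derivative_eq_intros simp: field_simps power2_eq_square)
  have "((\<lambda>l. (l / (l + (1 - l) * c)) *\<^sub>R \<kappa> + ((1 - l) * c / (l + (1 - l) * c)) *\<^sub>R \<kappa>')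
      has_vector_derivative (c / (l + (1 - l) * c)\<^sup>2) *\<^sub>R \<kappa> + (- c / (l + (1 - l) * c)\<^sup>2) *\<^sub>R \<kappa>') (at l)"
    using has_vector_derivative_add[OF has_vector_derivative_scaleR[OF a has_vector_derivative_const]
        has_vector_derivative_scaleR[OF b has_vector_derivative_const]] by simp
  thus ?thesis
    unfolding eq by (simp add: scaleR_diff_right)
qed

lemma KLdiv_weighted_sum:
  assumes "(l + m) *\<^sub>R k = l *\<^sub>R gradA \<theta> + m *\<^sub>R gradA \<theta>'"
  shows "l * KLdiv A gradA \<theta> \<eta> + m * KLdiv A gradA \<theta>' \<eta> =
    l * (inner \<theta> (gradA \<theta>) - A \<theta>) + m * (inner \<theta>' (gradA \<theta>') - A \<theta>')
      - (l + m) * (inner \<eta> k - A \<eta>)"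
proof -
  have "(l + m) * inner \<eta> k = l * inner \<eta> (gradA \<theta>) + m * inner \<eta> (gradA \<theta>')"
    using arg_cong[OF assms, of "inner \<eta>"] by (simp add: inner_add_right)
  thus ?thesis
    unfolding KLdiv_def by (simp add: inner_diff_left inner_commute algebra_simps)
qed

lemma has_real_derivative_conjugate_tilted_mean:
  fixes A :: "'a::real_inner \<Rightarrow> real" and c :: real and \<kappa> \<kappa>' :: 'a
  defines "k \<equiv> tilted_mean c \<kappa> \<kappa>'"
  assumes w: "l + (1 - l) * c \<noteq> 0"
    and A_der: "(A has_derivative (\<lambda>h. inner h (k l))) (at (g (k l)))"
    and g_der: "(g has_derivative G) (at (k l))"
  shows "((\<lambda>l. inner (g (k l)) (k l) - A (g (k l))) has_real_derivative
           c / (l + (1 - l) * c)\<^sup>2 * inner (g (k l)) (\<kappa> - \<kappa>')) (at l)"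
proof -
  have "(k has_derivative (\<lambda>t. t *\<^sub>R ((c / (l + (1 - l) * c)\<^sup>2) *\<^sub>R (\<kappa> - \<kappa>')))) (at l)"
    using has_vector_derivative_tilted_mean[OF w] unfolding k_def has_vector_derivative_def .
  from diff_chain_at[OF this has_derivative_legendre_conjugate[OF A_der g_der]]
  show ?thesis unfolding has_field_derivative_def o_def
    by (rule has_derivative_eq_rhs) (simp add: fun_eq_iff)
qed

lemma has_real_derivative_inner_tilted_mean:
  fixes c :: real and \<kappa> \<kappa>' :: "'a::real_inner"
  defines "k \<equiv> tilted_mean c \<kappa> \<kappa>'"
  assumes w: "l + (1 - l) * c \<noteq> 0"
    and g_der: "(g has_derivative G) (at (k l))"
  shows "((\<lambda>l. inner (g (k l)) v) has_real_derivative
           c / (l + (1 - l) * c)\<^sup>2 * inner (G (\<kappa> - \<kappa>')) v) (at l)"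
proof -
  have "(k has_derivative (\<lambda>t. t *\<^sub>R ((c / (l + (1 - l) * c)\<^sup>2) *\<^sub>R (\<kappa> - \<kappa>')))) (at l)"
    using has_vector_derivative_tilted_mean[OF w] unfolding k_def has_vector_derivative_def .
  from bounded_linear.has_derivative[OF bounded_linear_inner_left diff_chain_at[OF this g_der]]
  show ?thesis unfolding has_field_derivative_def o_def
    by (rule has_derivative_eq_rhs)
       (simp add: fun_eq_iff linear_cmul[OF has_derivative_linear[OF g_der]])
qed

definition reduced_objective ::
    "('a::real_inner \<Rightarrow> real) \<Rightarrow> ('a \<Rightarrow> 'a) \<Rightarrow> ('a \<Rightarrow> 'a) \<Rightarrow> real \<Rightarrow> 'a \<Rightarrow> 'a \<Rightarrow> real \<Rightarrow> real" where
  "reduced_objective A gradA gradF c \<theta> \<theta>' l =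
     l * KLdiv A gradA \<theta> (gradF (tilted_mean c (gradA \<theta>) (gradA \<theta>') l))
     + (1 - l) * c * KLdiv A gradA \<theta>' (gradF (tilted_mean c (gradA \<theta>) (gradA \<theta>') l))"

theorem reduced_objective_second_derivative_neg:
  fixes A :: "'a::real_inner \<Rightarrow> real" and gradA :: "'a \<Rightarrow> 'a" and c :: real and \<theta> \<theta>' :: 'a
  defines "k \<equiv> tilted_mean c (gradA \<theta>) (gradA \<theta>')"
  assumes c: "0 < c"
    and k_in: "\<And>l. l \<in> {0..1} \<Longrightarrow> k l \<in> M"
    and A_der: "\<And>m. m \<in> M \<Longrightarrow> (A has_derivative (\<lambda>h. inner h m)) (at (gradF m))"
    and gradF_der: "\<And>m. m \<in> M \<Longrightarrow> (gradF has_derivative HF m) (at m)"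
    and HF_pd: "\<And>m v. m \<in> M \<Longrightarrow> v \<noteq> 0 \<Longrightarrow> 0 < inner (HF m v) v"
    and distinct: "gradA \<theta> \<noteq> gradA \<theta>'"
  shows "\<exists>Phi' Phi''. \<forall>l\<in>{0..1}.
           (reduced_objective A gradA gradF c \<theta> \<theta>' has_real_derivative Phi' l) (at l) \<and>
           (Phi' has_real_derivative Phi'' l) (at l) \<and> Phi'' l < 0"
proof -
  define w where "w l = l + (1 - l) * c" for l
  define d where "d = gradA \<theta> - gradA \<theta>'"
  define G where "G m = inner (gradF m) m - A (gradF m)" for m
  define a where "a = inner \<theta> (gradA \<theta>) - A \<theta>"
  define a' where "a' = inner \<theta>' (gradA \<theta>') - A \<theta>'"
  define H' where "H' l = (1 - c) * G (k l) + c / w l * inner (gradF (k l)) d" for l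
  define Phi' where "Phi' l = a - c * a' - H' l" for l
  define Phi'' where "Phi'' l = - (c\<^sup>2 / w l ^ 3 * inner (HF (k l) d) d)" for l
  define S where "S = {l. 0 < w l}"
  have S_open: "open S"
    unfolding S_def w_def by (intro open_Collect_less continuous_intros)
  have w_pos: "0 < w l" if "l \<in> {0..1}" for l
    using that c unfolding w_def by (cases "l = 1") (auto intro: add_nonneg_pos add_pos_nonneg)
  have Phi_eq: "reduced_objective A gradA gradF c \<theta> \<theta>' l = l * a + (1 - l) * c * a' - w l * G (k l)"
    if "l \<in> S" for l
    unfolding reduced_objective_def w_def a_def a'_def G_def k_def
    by (rule KLdiv_weighted_sum[OF tilted_mean_scaled]) (use that in \<open>simp add: S_def w_def\<close>)
  have G_der: "((\<lambda>l. G (k l)) has_real_derivative c / (w l)\<^sup>2 * inner (gradF (k l)) d) (at l)"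
    if "l \<in> {0..1}" for l
    unfolding G_def k_def w_def d_def
    by (rule has_real_derivative_conjugate_tilted_mean)
       (use w_pos[OF that] A_der gradF_der k_in[OF that] in \<open>auto simp: w_def k_def\<close>)
  have inner_der: "((\<lambda>l. inner (gradF (k l)) d) has_real_derivative
      c / (w l)\<^sup>2 * inner (HF (k l) d) d) (at l)" if "l \<in> {0..1}" for l
    unfolding k_def w_def d_def
    by (rule has_real_derivative_inner_tilted_mean)
       (use w_pos[OF that] gradF_der k_in[OF that] in \<open>auto simp: w_def k_def\<close>)
  have w_der: "(w has_real_derivative 1 - c) (at l)" for l
    unfolding w_def by (auto intro!: derivative_eq_intros)
  have H_der: "((\<lambda>l. w l * G (k l)) has_real_derivative H' l) (at l)" if "l \<in> {0..1}" for l
    by (rule DERIV_cong[OF DERIV_mult[OF w_der G_der[OF that]]])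
       (use w_pos[OF that] in \<open>simp add: H'_def field_simps power2_eq_square\<close>)
  have Phi_der: "(reduced_objective A gradA gradF c \<theta> \<theta>' has_real_derivative Phi' l) (at l)"
    if "l \<in> {0..1}" for l
  proof -
    have "((\<lambda>l. l * a + (1 - l) * c * a' - w l * G (k l)) has_real_derivative Phi' l) (at l)"
      unfolding Phi'_def by (rule derivative_eq_intros H_der[OF that] | simp)+
    thus ?thesis
      by (rule has_field_derivative_transform_within_open[OF _ S_open])
         (use w_pos[OF that] Phi_eq in \<open>auto simp: S_def\<close>)
  qed
  have H'_der: "(H' has_real_derivative - Phi'' l) (at l)" if "l \<in> {0..1}" for l
  proof -
    have "((\<lambda>l. c / w l) has_real_derivative - (c * (1 - c)) / (w l * w l)) (at l)"
      by (rule DERIV_cong[OF DERIV_divide[OF DERIV_const w_der]]) (use w_pos[OF that] in auto)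
    from DERIV_add[OF DERIV_cmult[OF G_der[OF that]] DERIV_mult[OF this inner_der[OF that]]]
    show ?thesis
      unfolding H'_def
      by (rule DERIV_cong)
         (use w_pos[OF that] in \<open>simp add: Phi''_def field_simps power2_eq_square power3_eq_cube\<close>)
  qed
  have Phi'_der: "(Phi' has_real_derivative Phi'' l) (at l)" if "l \<in> {0..1}" for l
    using DERIV_diff[OF DERIV_const H'_der[OF that]] unfolding Phi'_def by simp
  have Phi''_neg: "Phi'' l < 0" if "l \<in> {0..1}" for l
  proof -
    have "0 < inner (HF (k l) d) d"
      using HF_pd[OF k_in[OF that]] distinct by (simp add: d_def)
    with w_pos[OF that] c show ?thesis by (simp add: Phi''_def)
  qed
  show ?thesis
    using Phi_der Phi'_der Phi''_neg by blast
qed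

theorem mainTheorem16:
  fixes K :: nat
    and A F :: "'a::euclidean_space \<Rightarrow> real"
    and gradA gradF :: "'a \<Rightarrow> 'a"
    and HA HF :: "'a \<Rightarrow> 'a \<Rightarrow> 'a"
    and Psi :: "'a set"
    and \<theta> \<theta>' :: 'a
  assumes K3: "K \<ge> 3"
    and Psi_open: "open Psi" and Psi_convex: "convex Psi"
    \<comment> \<open>log-partition function A: strictly convex, C^2 with positive definite Hessian\<close>
    and A_grad: "\<And>x. x \<in> Psi \<Longrightarrow> GDERIV A x :> gradA x"
    and A_hess: "\<And>x. x \<in> Psi \<Longrightarrow> (gradA has_derivative HA x) (at x)"
    and A_hess_cont: "\<And>v. continuous_on Psi (\<lambda>x. HA x v)"
    and A_hess_pd: "\<And>x v. x \<in> Psi \<Longrightarrow> v \<noteq> 0 \<Longrightarrow> inner v (HA x v) > 0"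
    and A_strict: "strict_convex_on Psi A"
    \<comment> \<open>conjugate F on the mean-parameter space gradA ` Psi: strictly convex, C^2,
        with gradient gradF inverse to gradA\<close>
    and F_conj: "\<And>k. k \<in> gradA ` Psi \<Longrightarrow> F k = (SUP x\<in>Psi. inner k x - A x)"
    and F_grad: "\<And>k. k \<in> gradA ` Psi \<Longrightarrow> GDERIV F k :> gradF k"
    and F_hess: "\<And>k. k \<in> gradA ` Psi \<Longrightarrow> (gradF has_derivative HF k) (at k)"
    and F_hess_cont: "\<And>v. continuous_on (gradA ` Psi) (\<lambda>k. HF k v)"
    and F_strict: "strict_convex_on (gradA ` Psi) F"
    and gradF_inv: "\<And>x. x \<in> Psi \<Longrightarrow> gradF (gradA x) = x"
    and \<theta>_in: "\<theta> \<in> Psi" and \<theta>'_in: "\<theta>' \<in> Psi" and \<theta>_ne: "\<theta> \<noteq> \<theta>'"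
    \<comment> \<open>standing assumption: the tilted mean parameter lies where gradF maps into Psi\<close>
    and kt_dom: "\<And>l::real. 0 \<le> l \<Longrightarrow> l \<le> 1 \<Longrightarrow>
        (let c = (real K - 2) / (real K - 1) in
          (1 / (l + (1 - l) * c)) *\<^sub>R (l *\<^sub>R gradA \<theta> + ((1 - l) * c) *\<^sub>R gradA \<theta>'))
        \<in> gradA ` Psi"
  shows "let c = (real K - 2) / (real K - 1);
             kt = (\<lambda>l::real. (1 / (l + (1 - l) * c)) *\<^sub>R (l *\<^sub>R gradA \<theta> + ((1 - l) * c) *\<^sub>R gradA \<theta>'));
             et = (\<lambda>l. gradF (kt l));
             Phi = (\<lambda>l. l * KLdiv A gradA \<theta> (et l) + (1 - l) * c * KLdiv A gradA \<theta>' (et l))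
         in (\<exists>Phi' Phi''. \<forall>l\<in>{0<..<1}.
                (Phi has_real_derivative Phi' l) (at l) \<and>
                (Phi' has_real_derivative Phi'' l) (at l) \<and> Phi'' l < 0)
            \<and> strict_concave_on {0..1} Phi"
proof -
  define c where "c = (real K - 2) / (real K - 1)"
  define Phi where "Phi = reduced_objective A gradA gradF c \<theta> \<theta>'"
  have "0 < c" using K3 by (simp add: c_def)
  have inv: "gradF m \<in> Psi" "gradA (gradF m) = m" if "m \<in> gradA ` Psi" for m
    using that gradF_inv by auto
  have A_der: "(A has_derivative (\<lambda>h. inner h m)) (at (gradF m))" if "m \<in> gradA ` Psi" for m
    using A_grad[OF inv(1)[OF that]] inv(2)[OF that] by (simp add: gderiv_def)
  have HF_pd: "0 < inner (HF m v) v" if "m \<in> gradA ` Psi" "v \<noteq> 0" for m v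
    using that(1) pos_def_derivative_of_inverse[OF Psi_open _ gradF_inv A_hess _ A_hess_pd that(2)]
      F_hess by blast
  have k_in: "tilted_mean c (gradA \<theta>) (gradA \<theta>') l \<in> gradA ` Psi" if "l \<in> {0..1}" for l
    using kt_dom[of l] that unfolding c_def Let_def tilted_mean_def by simp
  have "gradA \<theta> \<noteq> gradA \<theta>'" using gradF_inv \<theta>_in \<theta>'_in \<theta>_ne by metis
  then obtain Phi' Phi'' where Phi: "\<forall>l\<in>{0..1}. (Phi has_real_derivative Phi' l) (at l) \<and>
      (Phi' has_real_derivative Phi'' l) (at l) \<and> Phi'' l < 0"
    using reduced_objective_second_derivative_neg[where gradA = gradA and \<theta> = \<theta> and \<theta>' = \<theta>',
        OF \<open>0 < c\<close> k_in A_der F_hess HF_pd]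
    unfolding Phi_def by blast
  hence "strict_concave_on {0..1} Phi"
    by (intro strict_concave_on_if_second_derivative_neg) blast+
  moreover have "\<exists>Phi' Phi''. \<forall>l\<in>{0<..<1}. (Phi has_real_derivative Phi' l) (at l) \<and>
      (Phi' has_real_derivative Phi'' l) (at l) \<and> Phi'' l < 0"
    using Phi by (intro exI[of _ Phi'] exI[of _ Phi'']) auto
  moreover have "(\<lambda>l. l * KLdiv A gradA \<theta> (gradF (tilted_mean c (gradA \<theta>) (gradA \<theta>') l))
      + (1 - l) * c * KLdiv A gradA \<theta>' (gradF (tilted_mean c (gradA \<theta>) (gradA \<theta>') l))) = Phi"
    unfolding Phi_def reduced_objective_def ..
  ultimately show ?thesis
    unfolding Let_def c_def[symmetric] tilted_mean_def by simp
qed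

end
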